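(* Let $m,b\ge 1$ and $r\ge 0$ be integers, let $f\colon[0,1]\to\mathbb R$ be $(r+1)$-times differentiable with $|f^{(r+1)}(x)|\le M$ for all $x\in[0,1]$, and let $B=(B_1,\dots,B_b)\in\mathrm{PTE}(m,b,r)$. Setting $$c_j=\sum_{i\in B_j}\int_{(i-1)/m}^{i/m} f(x)\,dx,\qquad j=1,\dots,b,$$ we have, for all $i,j\in\{1,\dots,b\}$, $$|c_i-c_j|\le \frac{M}{2^{r}\,b\,(r+1)!}.$$
   Context: $[m]=\{1,\dots,m\}$. A partition of $[m]$ into $b$ blocks is an ordered list $(B_1,\dots,B_b)$ of pairwise disjoint (possibly empty) subsets with union $[m]$. It is $r$-regular if $\sum_{x\in B_1}x^k=\dots=\sum_{x\in B_b}x^k$ for all $k=0,1,\dots,r$. $\mathrm{PTE}(m,b,r)$ denotes the set of $r$-regular partitions of $[m]$ into $b$ blocks. *)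

theory Defs
  imports "HOL-Analysis.Analysis"
begin

text \<open>An ordered partition (B_1,...,B_b) of [m] into b (possibly empty) blocks is
  represented as a function B from block indices to sets, with blocks indexed by
  1..b and B j = {} for j outside 1..b.\<close>

definition PTE :: "nat \<Rightarrow> nat \<Rightarrow> nat \<Rightarrow> (nat \<Rightarrow> nat set) set" where
  "PTE m b r = {B.
     (\<forall>j. j \<notin> {1..b} \<longrightarrow> B j = {}) \<and>
     (\<forall>i\<in>{1..b}. \<forall>j\<in>{1..b}. i \<noteq> j \<longrightarrow> B i \<inter> B j = {}) \<and>
     (\<Union>j\<in>{1..b}. B j) = {1..m} \<and>
     (\<forall>k\<le>r. \<forall>i\<in>{1..b}. \<forall>j\<in>{1..b}. (\<Sum>x\<in>B i. x ^ k) = (\<Sum>x\<in>B j. x ^ k))}"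

end

theory Submission
  imports Defs "HOL-Computational_Algebra.Polynomial"
begin

text \<open>Expand f by Taylor's theorem of order r about 1/2; on [0,1] the remainder is at most
  M / (2^(r+1) (r+1)!). The integral of the Taylor polynomial over the l-th cell [(l-1)/m, l/m]
  is a polynomial of degree at most r in l, so r-regularity makes its block sums agree. Only the
  remainders survive: a block consists of m/b cells of length 1/m, which bounds its remainder by
  M / (2^(r+1) b (r+1)!), and a difference of two blocks by twice that.\<close>

lemma taylor_midpoint_remainder_bound:
  fixes r :: nat and f :: "real \<Rightarrow> real" and Df :: "nat \<Rightarrow> real \<Rightarrow> real" and M x :: real
  assumes "Df 0 = f"
    and deriv: "\<And>k x. k \<le> r \<Longrightarrow> x \<in> {0..1} \<Longrightarrow>
           (Df k has_real_derivative Df (Suc k) x) (at x within {0..1})"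
    and bound: "\<And>x. x \<in> {0..1} \<Longrightarrow> \<bar>Df (Suc r) x\<bar> \<le> M"
    and x: "0 < x" "x < 1"
  shows "\<bar>f x - (\<Sum>k<Suc r. Df k (1/2) / fact k * (x - 1/2) ^ k)\<bar> \<le> M / (2 ^ Suc r * fact (Suc r))"
proof -
  have M_nonneg: "0 \<le> M"
    using bound[of 0] by auto
  show ?thesis
  proof (cases "x = 1/2")
    case True
    then have "(\<Sum>k<Suc r. Df k (1/2) / fact k * (x - 1/2) ^ k) = f x"
      unfolding sum.lessThan_Suc_shift using assms(1) by (simp add: True)
    then show ?thesis
      using M_nonneg by simp
  next
    case False
    have "\<forall>k t. k < Suc r \<and> min x (1/2) \<le> t \<and> t \<le> max x (1/2) \<longrightarrow> DERIV (Df k) t :> Df (Suc k) t"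
    proof (intro allI impI)
      fix k t
      assume kt: "k < Suc r \<and> min x (1/2) \<le> t \<and> t \<le> max x (1/2)"
      then have "t \<in> interior {0..1}"
        using x by auto
      then show "DERIV (Df k) t :> Df (Suc k) t"
        using deriv[of k t] kt interior_subset at_within_interior by fastforce
    qed
    from Taylor[OF zero_less_Suc assms(1) this min.cobounded2 max.cobounded2
        min.cobounded1 max.cobounded1 False] obtain t
      where t: "if x < 1/2 then x < t \<and> t < 1/2 else 1/2 < t \<and> t < x"
        and eq: "f x = (\<Sum>k<Suc r. Df k (1/2) / fact k * (x - 1/2) ^ k)
                    + Df (Suc r) t / fact (Suc r) * (x - 1/2) ^ Suc r"
      by blast
    have t01: "t \<in> {0..1}"
      using t x by (auto split: if_splits)
    have dist: "\<bar>x - 1/2\<bar> ^ Suc r \<le> (1/2) ^ Suc r"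
      using x by (intro power_mono) (auto simp: abs_if)
    have "\<bar>f x - (\<Sum>k<Suc r. Df k (1/2) / fact k * (x - 1/2) ^ k)\<bar>
        = \<bar>Df (Suc r) t\<bar> / fact (Suc r) * \<bar>x - 1/2\<bar> ^ Suc r"
      using eq by (simp add: abs_mult power_abs)
    also have "\<dots> \<le> M / fact (Suc r) * (1/2) ^ Suc r"
      using bound[OF t01] dist M_nonneg by (intro mult_mono divide_right_mono) auto
    also have "\<dots> = M / (2 ^ Suc r * fact (Suc r))"
      by (simp add: power_one_over)
    finally show ?thesis .
  qed
qed

lemma has_integral_shifted_power:
  fixes u v c :: real
  assumes "u \<le> v"
  shows "((\<lambda>x. (x - c) ^ k) has_integral ((v - c) ^ Suc k - (u - c) ^ Suc k) / Suc k) {u..v}"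
proof -
  have "((\<lambda>x. (x - c) ^ Suc k / Suc k) has_real_derivative (x - c) ^ k) (at x within {u..v})" for x
    by (rule derivative_eq_intros refl | simp)+
  then have "((\<lambda>x. (x - c) ^ k) has_integral (v - c) ^ Suc k / Suc k - (u - c) ^ Suc k / Suc k) {u..v}"
    using assms
    by (intro fundamental_theorem_of_calculus) (auto simp: has_real_derivative_iff_has_vector_derivative)
  then show ?thesis
    by (simp add: diff_divide_distrib)
qed

lemma degree_linear_power_diff_le:
  fixes a b s :: "'a::idom"
  assumes "s \<noteq> 0"
  shows "degree ([:a, s:] ^ Suc n - [:b, s:] ^ Suc n) \<le> n"
proof (rule degree_le, intro allI impI)
  have deg: "degree ([:x, s:] ^ Suc n) = Suc n" for x
    using assms by (simp add: degree_power_eq del: power_Suc)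
  have lead: "coeff ([:x, s:] ^ Suc n) (Suc n) = s ^ Suc n" for x
    using lead_coeff_power[of "[:x, s:]" "Suc n"] assms unfolding deg by simp
  fix i assume "n < i"
  then consider "i = Suc n" | "i > Suc n" by linarith
  then show "coeff ([:a, s:] ^ Suc n - [:b, s:] ^ Suc n) i = 0"
    by cases (simp_all add: lead coeff_eq_0 deg del: power_Suc)
qed

lemma cell_integral_shifted_power_poly:
  fixes m c :: real
  assumes "m > 0"
  obtains Q :: "real poly"
  where "degree Q \<le> k"
    and "\<And>l. ((\<lambda>x. (x - c) ^ k) has_integral poly Q l) {(l - 1) / m .. l / m}"
proof
  \<comment> \<open>The antiderivative (x - c)^(k+1)/(k+1) at l/m and (l-1)/m: two polynomials in l with
    equal leading coefficients, so the top-degree terms cancel.\<close>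
  define U where "U = [:- c - 1 / m, 1 / m:] ^ Suc k"
  define V where "V = [:- c, 1 / m:] ^ Suc k"
  have "degree (V - U) \<le> k"
    unfolding U_def V_def using assms by (intro degree_linear_power_diff_le) simp
  then show "degree (smult (1 / Suc k) (V - U)) \<le> k"
    by (meson degree_smult_le order_trans)
  fix l :: real
  have "poly V l = (l / m - c) ^ Suc k" "poly U l = ((l - 1) / m - c) ^ Suc k"
    unfolding U_def V_def using assms by (simp_all add: field_simps)
  moreover have "(l - 1) / m \<le> l / m"
    using assms by (simp add: divide_right_mono)
  ultimately show "((\<lambda>x. (x - c) ^ k) has_integral poly (smult (1 / Suc k) (V - U)) l)
      {(l - 1) / m .. l / m}"
    using has_integral_shifted_power by simp
qed

lemma cell_integrals_polynomial_approx:
  fixes r m :: nat and f :: "real \<Rightarrow> real" and Df :: "nat \<Rightarrow> real \<Rightarrow> real" and M :: real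
  assumes "m \<ge> 1" and "Df 0 = f"
    and deriv: "\<And>k x. k \<le> r \<Longrightarrow> x \<in> {0..1} \<Longrightarrow>
           (Df k has_real_derivative Df (Suc k) x) (at x within {0..1})"
    and bound: "\<And>x. x \<in> {0..1} \<Longrightarrow> \<bar>Df (Suc r) x\<bar> \<le> M"
  obtains q :: "real poly"
  where "degree q \<le> r"
    and "\<And>l. l \<in> {1..m} \<Longrightarrow>
           \<bar>integral {(real l - 1) / m .. real l / m} f - poly q (real l)\<bar>
             \<le> M / (2 ^ Suc r * fact (Suc r)) / m"
proof -
  define P where "P x = (\<Sum>k<Suc r. Df k (1/2) / fact k * (x - 1/2) ^ k)" for x
  define K where "K = M / (2 ^ Suc r * fact (Suc r))"
  have m: "real m > 0"
    using assms(1) by simp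
  have "\<exists>Q. degree Q \<le> k \<and> (\<forall>l. ((\<lambda>x. (x - 1/2) ^ k) has_integral poly Q l) {(l - 1) / m .. l / m})"
    for k by (metis cell_integral_shifted_power_poly[OF m])
  then obtain Q where Q: "\<And>k. degree (Q k) \<le> k"
    "\<And>k l. ((\<lambda>x. (x - 1/2) ^ k) has_integral poly (Q k) l) {(l - 1) / m .. l / m}"
    by metis
  define q where "q = (\<Sum>k<Suc r. smult (Df k (1/2) / fact k) (Q k))"
  have cont: "continuous_on {0..1} f"
    using DERIV_continuous_on deriv[of 0] assms(2) by blast
  show thesis
  proof (rule that)
    show "degree q \<le> r"
      unfolding q_def
      by (intro degree_sum_le) (auto intro: order_trans[OF degree_smult_le] order_trans[OF Q(1)])
    fix l :: nat
    assume l: "l \<in> {1..m}"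
    define u v where "u = (real l - 1) / m" and "v = real l / m"
    have "u \<le> v" and cell: "{u..v} \<subseteq> {0..1}" and len: "v - u = 1 / m"
      using l m by (auto simp: u_def v_def field_simps)
    have "(P has_integral poly q l) {u..v}"
      unfolding P_def q_def poly_sum poly_smult u_def v_def
      by (intro has_integral_sum has_integral_mult_right Q(2)) simp
    moreover have "f integrable_on {u..v}"
      using cont cell by (meson continuous_on_subset integrable_continuous_interval)
    ultimately have remainder: "((\<lambda>x. f x - P x) has_integral integral {u..v} f - poly q l) {u..v}"
      by (intro has_integral_diff) auto
    have taylor: "\<bar>f x - P x\<bar> \<le> K" if "x \<in> {u..v} - {0, 1}" for x
      unfolding P_def K_def using that cell
      by (intro taylor_midpoint_remainder_bound[OF assms(2) deriv bound]) auto
    have "K \<ge> 0"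
      using bound[of 0] by (simp add: K_def)
    from has_integral_bound_real[OF this _ remainder, of "{0, 1}"] taylor
    have "\<bar>integral {u..v} f - poly q l\<bar> \<le> K * (v - u)"
      using \<open>u \<le> v\<close> by simp
    then show "\<bar>integral {u..v} f - poly q (real l)\<bar> \<le> M / (2 ^ Suc r * fact (Suc r)) / m"
      by (simp add: len K_def)
  qed
qed

lemma sum_poly_eq_if_power_sums_eq:
  fixes q :: "'a::comm_semiring_1 poly"
  assumes "degree q \<le> r"
    and "\<And>k. k \<le> r \<Longrightarrow> (\<Sum>x\<in>X. x ^ k) = (\<Sum>x\<in>Y. x ^ k)"
  shows "(\<Sum>x\<in>X. poly q (of_nat x)) = (\<Sum>x\<in>Y. poly q (of_nat x))"
proof -
  have expand: "(\<Sum>x\<in>Z. poly q (of_nat x)) = (\<Sum>k\<le>r. coeff q k * of_nat (\<Sum>x\<in>Z. x ^ k))" for Z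
  proof -
    have "poly q y = (\<Sum>k\<le>r. coeff q k * y ^ k)" for y
      by (subst poly_as_sum_of_monoms'[OF assms(1), symmetric]) (simp add: poly_sum poly_monom)
    then show ?thesis
      by (simp add: sum.swap[of _ Z] sum_distrib_left)
  qed
  show ?thesis
    unfolding expand by (rule sum.cong) (simp_all add: assms(2))
qed

lemma PTE_block_subset:
  assumes "B \<in> PTE m b r" and "j \<in> {1..b}"
  shows "B j \<subseteq> {1..m}"
  using assms unfolding PTE_def by blast

lemma PTE_power_sum_eq:
  assumes "B \<in> PTE m b r" and "k \<le> r" and "i \<in> {1..b}" and "j \<in> {1..b}"
  shows "(\<Sum>x\<in>B i. x ^ k) = (\<Sum>x\<in>B j. x ^ k)"
  using assms unfolding PTE_def by blast

lemma PTE_card_block: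
  assumes B: "B \<in> PTE m b r" and j: "j \<in> {1..b}"
  shows "b * card (B j) = m"
proof -
  have card_eq: "card (B i) = card (B j)" if "i \<in> {1..b}" for i
    using PTE_power_sum_eq[OF B _ that j, of 0] by simp
  have "m = card (\<Union>i\<in>{1..b}. B i)"
    using B unfolding PTE_def by simp
  also have "\<dots> = (\<Sum>i\<in>{1..b}. card (B i))"
  proof (rule card_UN_disjoint)
    show "\<forall>i\<in>{1..b}. finite (B i)"
      using PTE_block_subset[OF B] finite_subset by blast
  qed (use B in \<open>auto simp: PTE_def\<close>)
  also have "\<dots> = b * card (B j)"
    using card_eq by simp
  finally show ?thesis ..
qed

theorem mainTheorem15:
  fixes m b r :: nat and f :: "real \<Rightarrow> real" and Df :: "nat \<Rightarrow> real \<Rightarrow> real"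
    and M :: real and B :: "nat \<Rightarrow> nat set" and c :: "nat \<Rightarrow> real"
  assumes "m \<ge> 1" and "b \<ge> 1"
    and "Df 0 = f"
    and "\<And>k x. k \<le> r \<Longrightarrow> x \<in> {0..1} \<Longrightarrow>
           (Df k has_real_derivative Df (Suc k) x) (at x within {0..1})"
    and "\<And>x. x \<in> {0..1} \<Longrightarrow> \<bar>Df (Suc r) x\<bar> \<le> M"
    and "B \<in> PTE m b r"
    and "\<And>j. c j = (\<Sum>i\<in>B j. integral {(real i - 1) / real m .. real i / real m} f)"
    and "i \<in> {1..b}" and "j \<in> {1..b}"
  shows "\<bar>c i - c j\<bar> \<le> M / (2 ^ r * real b * fact (r + 1))"
proof -
  define K where "K = M / (2 ^ Suc r * fact (Suc r))"
  obtain q where deg: "degree q \<le> r"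
    and approx: "\<And>l. l \<in> {1..m} \<Longrightarrow>
      \<bar>integral {(real l - 1) / m .. real l / m} f - poly q (real l)\<bar> \<le> K / m"
    using cell_integrals_polynomial_approx[OF assms(1,3,4,5)] unfolding K_def by blast
  define err where "err l = integral {(real l - 1) / m .. real l / m} f - poly q (real l)" for l
  have split: "c k = (\<Sum>l\<in>B k. poly q (real l)) + (\<Sum>l\<in>B k. err l)" for k
    by (simp add: assms(7) err_def flip: sum.distrib)
  have poly_eq: "(\<Sum>l\<in>B i. poly q (real l)) = (\<Sum>l\<in>B j. poly q (real l))"
    using sum_poly_eq_if_power_sums_eq[OF deg PTE_power_sum_eq[OF assms(6) _ assms(8,9)]] by simp
  have err_bound: "\<bar>\<Sum>l\<in>B k. err l\<bar> \<le> K / b" if k: "k \<in> {1..b}" for k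
  proof -
    have "\<bar>\<Sum>l\<in>B k. err l\<bar> \<le> card (B k) * (K / m)"
      using PTE_block_subset[OF assms(6) k] approx unfolding err_def
      by (intro order_trans[OF sum_abs sum_bounded_above]) auto
    also have "\<dots> = K / b"
      using PTE_card_block[OF assms(6) k] assms(1,2) by (auto simp: field_simps)
    finally show ?thesis .
  qed
  have "\<bar>c i - c j\<bar> \<le> \<bar>\<Sum>l\<in>B i. err l\<bar> + \<bar>\<Sum>l\<in>B j. err l\<bar>"
    unfolding split poly_eq by linarith
  also have "\<dots> \<le> 2 * (K / b)"
    using err_bound[OF assms(8)] err_bound[OF assms(9)] by simp
  also have "\<dots> = M / (2 ^ r * real b * fact (r + 1))"
    by (simp add: K_def)
  finally show ?thesis .
qed

end
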